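(* Assume (A1). Let $\alpha\in\mathbb R\setminus\{1\}$, $\eta>0$, $\kappa$ with $(\alpha-1)\kappa\ge0$, and let $\bar\mu\in\mathcal M_1(\mathsf T)$ with $\Psi_\alpha(\bar\mu)<\infty$ and $0<\bar\mu(\Gamma_\alpha(b_{\bar\mu,\alpha}+\kappa))<\infty$ be a fixed point of the Power Descent transition, $\mathcal I_\alpha(\bar\mu)=\bar\mu$. Then $\Psi_\alpha(\bar\mu)=\inf_{\zeta\in\mathcal M_{1,\bar\mu}(\mathsf T)}\Psi_\alpha(\zeta)$. Moreover, for every $\zeta\in\mathcal M_{1,\bar\mu}(\mathsf T)$, $\Psi_\alpha(\zeta)=\Psi_\alpha(\bar\mu)$ implies $\bar\mu K=\zeta K$.
   Context: Let $(\mathsf Y,\mathcal Y,\nu)$ be a measure space with $\nu$ $\sigma$-finite, $(\mathsf T,\mathcal T)$ a measurable space, $\mathcal M_1(\mathsf T)$ its probability measures and $\mathcal M_{1,\zeta}(\mathsf T)$ those dominated by $\zeta$. Let $k:\mathsf T\times\mathsf Y\to[0,\infty)$ be measurable with $\int k(\theta,y)\nu(dy)=1$, $K(\theta,A)=\int_Ak(\theta,y)\nu(dy)$, $\mu K(A)=\int\mu(d\theta)K(\theta,A)$, $\mu k(y)=\int\mu(d\theta)k(\theta,y)$, $\mu(g)=\int g\,d\mu$. Let $p$ be measurable positive on $\mathsf Y$. $f_0(u)=u-1-\log u$, $f_\alpha(u)=\frac{1}{\alpha(\alpha-1)}[u^\alpha-1-\alpha(u-1)]$ for $\alpha\notin\{0,1\}$,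 $f_\alpha'(u)=\frac{u^{\alpha-1}-1}{\alpha-1}$; $\Psi_\alpha(\mu)=\int f_\alpha(\mu k/p)p\,d\nu$; $b_{\mu,\alpha}(\theta)=\int k(\theta,y)f_\alpha'(\mu k(y)/p(y))\nu(dy)$. $\Gamma_\alpha(v)=[(\alpha-1)v+1]^{\eta/(1-\alpha)}$ and $\mathcal I_\alpha(\mu)(d\theta)=\frac{\mu(d\theta)\Gamma_\alpha(b_{\mu,\alpha}(\theta)+\kappa)}{\mu(\Gamma_\alpha(b_{\mu,\alpha}+\kappa))}$. Assumption (A1): $k>0$, $p>0$ everywhere and $\int p\,d\nu<\infty$. *)

theory Defs
  imports "HOL-Probability.Probability"
begin

definition f_alpha :: "real \<Rightarrow> real \<Rightarrow> real" where
  "f_alpha \<alpha> u = (if \<alpha> = 0 then u - 1 - ln u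
     else (1 / (\<alpha> * (\<alpha> - 1))) * (u powr \<alpha> - 1 - \<alpha> * (u - 1)))"

definition f_alpha' :: "real \<Rightarrow> real \<Rightarrow> real" where
  "f_alpha' \<alpha> u = (u powr (\<alpha> - 1) - 1) / (\<alpha> - 1)"

definition kernK :: "('b \<Rightarrow> 'a \<Rightarrow> real) \<Rightarrow> 'a measure \<Rightarrow> 'b \<Rightarrow> 'a set \<Rightarrow> ennreal" where
  "kernK k \<nu> \<theta> A = (\<integral>\<^sup>+ y \<in> A. ennreal (k \<theta> y) \<partial>\<nu>)"

definition muK :: "('b \<Rightarrow> 'a \<Rightarrow> real) \<Rightarrow> 'a measure \<Rightarrow> 'b measure \<Rightarrow> 'a set \<Rightarrow> ennreal" where
  "muK k \<nu> \<mu> A = (\<integral>\<^sup>+ \<theta>. kernK k \<nu> \<theta> A \<partial>\<mu>)"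

text \<open>mu k (y) = integral of k(theta, y) mu(dtheta)  (finite nu-a.e.; set to 0 where infinite).\<close>
definition muk :: "('b \<Rightarrow> 'a \<Rightarrow> real) \<Rightarrow> 'b measure \<Rightarrow> 'a \<Rightarrow> real" where
  "muk k \<mu> y = enn2real (\<integral>\<^sup>+ \<theta>. ennreal (k \<theta> y) \<partial>\<mu>)"

text \<open>Psi_alpha(mu) = integral of f_alpha(mu k / p) p d nu  (integrand is nonnegative).\<close>
definition Psi :: "real \<Rightarrow> ('b \<Rightarrow> 'a \<Rightarrow> real) \<Rightarrow> 'a measure \<Rightarrow> ('a \<Rightarrow> real) \<Rightarrow> 'b measure \<Rightarrow> ennreal" where
  "Psi \<alpha> k \<nu> p \<mu> = (\<integral>\<^sup>+ y. ennreal (f_alpha \<alpha> (muk k \<mu> y / p y) * p y) \<partial>\<nu>)"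

definition b_mu :: "real \<Rightarrow> ('b \<Rightarrow> 'a \<Rightarrow> real) \<Rightarrow> 'a measure \<Rightarrow> ('a \<Rightarrow> real) \<Rightarrow> 'b measure \<Rightarrow> 'b \<Rightarrow> ereal" where
  "b_mu \<alpha> k \<nu> p \<mu> \<theta> =
     enn2ereal (\<integral>\<^sup>+ y. ennreal (k \<theta> y * f_alpha' \<alpha> (muk k \<mu> y / p y)) \<partial>\<nu>)
   - enn2ereal (\<integral>\<^sup>+ y. ennreal (- (k \<theta> y * f_alpha' \<alpha> (muk k \<mu> y / p y))) \<partial>\<nu>)"

text \<open>Gamma_alpha(v) = ((alpha-1) v + 1) ^ (eta/(1-alpha)), extended to extended reals
  by the natural limiting values.\<close>
definition Gam :: "real \<Rightarrow> real \<Rightarrow> ereal \<Rightarrow> ennreal" where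
  "Gam \<alpha> \<eta> v = (case ereal (\<alpha> - 1) * v + 1 of
      ereal w \<Rightarrow> (if w > 0 then ennreal (w powr (\<eta> / (1 - \<alpha>)))
                 else if w = 0 \<and> \<eta> / (1 - \<alpha>) < 0 then \<infinity> else 0)
    | PInfty \<Rightarrow> (if \<eta> / (1 - \<alpha>) > 0 then \<infinity> else 0)
    | MInfty \<Rightarrow> 0)"

definition normI :: "real \<Rightarrow> real \<Rightarrow> real \<Rightarrow> ('b \<Rightarrow> 'a \<Rightarrow> real) \<Rightarrow> 'a measure \<Rightarrow> ('a \<Rightarrow> real) \<Rightarrow> 'b measure \<Rightarrow> ennreal" where
  "normI \<alpha> \<eta> \<kappa> k \<nu> p \<mu> = (\<integral>\<^sup>+ \<theta>. Gam \<alpha> \<eta> (b_mu \<alpha> k \<nu> p \<mu> \<theta> + ereal \<kappa>) \<partial>\<mu>)"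

definition I_alpha :: "real \<Rightarrow> real \<Rightarrow> real \<Rightarrow> ('b \<Rightarrow> 'a \<Rightarrow> real) \<Rightarrow> 'a measure \<Rightarrow> ('a \<Rightarrow> real) \<Rightarrow> 'b measure \<Rightarrow> 'b measure" where
  "I_alpha \<alpha> \<eta> \<kappa> k \<nu> p \<mu> = density \<mu> (\<lambda>\<theta>. Gam \<alpha> \<eta> (b_mu \<alpha> k \<nu> p \<mu> \<theta> + ereal \<kappa>) / normI \<alpha> \<eta> \<kappa> k \<nu> p \<mu>)"

definition M1_dom :: "'b measure \<Rightarrow> 'b measure \<Rightarrow> 'b measure set" where
  "M1_dom T \<zeta> = {\<mu>. prob_space \<mu> \<and> sets \<mu> = sets T \<and> absolutely_continuous \<zeta> \<mu>}"

end

theory Submission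
  imports Defs
begin

text \<open>
  Write \<open>u = \<mu>bar k\<close>, \<open>v = \<zeta> k\<close> and \<open>r = (u / p) powr (\<alpha> - 1)\<close>. Since
  \<open>(\<alpha> - 1) b(\<theta>) = \<integral> k(\<theta>, y) r(y) \<nu>(dy) - 1\<close> for \<open>b = b_mu \<alpha> k \<nu> p \<mu>bar\<close> and \<open>\<Gamma>\<^sub>\<alpha>\<close> is
  injective, the fixed-point equation says that \<open>\<theta> \<mapsto> \<integral> k(\<theta>, \<cdot>) r d\<nu>\<close> is \<open>\<mu>bar\<close>-a.e.
  constant, hence also \<open>\<zeta>\<close>-a.e. for \<open>\<zeta> \<ll> \<mu>bar\<close>; integrating gives \<open>\<integral> v r d\<nu> = \<integral> u r d\<nu>\<close>.
  Together with \<open>\<integral> u d\<nu> = \<integral> v d\<nu> = 1\<close> the linear term \<open>\<integral> f\<^sub>\<alpha>'(u/p) (v - u) d\<nu>\<close> vanishes, so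
  \<open>\<Psi>\<^sub>\<alpha>(\<zeta>) = \<Psi>\<^sub>\<alpha>(\<mu>bar) + \<integral> p D(u/p, v/p) d\<nu>\<close> with \<open>D\<close> the Bregman divergence of the
  strictly convex \<open>f\<^sub>\<alpha>\<close>. Hence \<open>\<mu>bar\<close> is a minimiser, and equality forces \<open>u = v\<close> \<open>\<nu>\<close>-a.e.
\<close>

lemma f_alpha_has_real_derivative:
  assumes "\<alpha> \<noteq> 1" "x > 0"
  shows "(f_alpha \<alpha> has_real_derivative f_alpha' \<alpha> x) (at x)"
proof (cases "\<alpha> = 0")
  case True
  have f'_eq: "f_alpha' \<alpha> x = 1 - 0 - 1/x" using True assms
    by (simp add: f_alpha'_def powr_minus field_simps)
  have "((\<lambda>u. u - 1 - ln u) has_real_derivative 1 - 0 - 1/x) (at x)"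
    using assms by (auto intro!: derivative_eq_intros simp: field_simps)
  moreover have "f_alpha \<alpha> = (\<lambda>u. u - 1 - ln u)" using True by (auto simp: f_alpha_def fun_eq_iff)
  ultimately show ?thesis unfolding f'_eq by simp
next
  case False
  have "((\<lambda>u. (1 / (\<alpha> * (\<alpha> - 1))) * (u powr \<alpha> - 1 - \<alpha> * (u - 1))) has_real_derivative
      (1 / (\<alpha> * (\<alpha> - 1))) * (\<alpha> * x powr (\<alpha> - 1) - 0 - \<alpha> * (1 - 0))) (at x)"
    using assms by (intro DERIV_cmult DERIV_diff DERIV_cmult has_real_derivative_powr DERIV_const DERIV_ident) auto
  moreover have "f_alpha \<alpha> = (\<lambda>u. (1 / (\<alpha> * (\<alpha> - 1))) * (u powr \<alpha> - 1 - \<alpha> * (u - 1)))"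
    using False by (auto simp: f_alpha_def fun_eq_iff)
  moreover have "(1 / (\<alpha> * (\<alpha> - 1))) * (\<alpha> * x powr (\<alpha> - 1) - 0 - \<alpha> * (1 - 0)) = f_alpha' \<alpha> x"
    using False assms by (simp add: f_alpha'_def field_simps)
  ultimately show ?thesis by simp
qed

lemma f_alpha'_strict_mono:
  assumes "\<alpha> \<noteq> 1" "0 < x" "x < y"
  shows "f_alpha' \<alpha> x < f_alpha' \<alpha> y"
proof (cases "\<alpha> > 1")
  case True
  then have "x powr (\<alpha> - 1) < y powr (\<alpha> - 1)" using assms by (intro powr_less_mono2) auto
  then show ?thesis using True by (simp add: f_alpha'_def divide_strict_right_mono)
next
  case False
  then have "\<alpha> < 1" using assms by simp
  moreover have "y powr (\<alpha> - 1) < x powr (\<alpha> - 1)"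
    using \<open>\<alpha> < 1\<close> assms by (intro powr_less_mono2_neg) auto
  ultimately show ?thesis by (simp add: f_alpha'_def divide_strict_right_mono_neg)
qed

definition bregman :: "real \<Rightarrow> real \<Rightarrow> real \<Rightarrow> real" where
  "bregman \<alpha> s t = f_alpha \<alpha> t - f_alpha \<alpha> s - f_alpha' \<alpha> s * (t - s)"

lemma bregman_pos:
  assumes "\<alpha> \<noteq> 1" "s > 0" "t > 0" "s \<noteq> t"
  shows "bregman \<alpha> s t > 0"
proof (cases "s < t")
  case True
  obtain z where z: "s < z" "z < t" "f_alpha \<alpha> t - f_alpha \<alpha> s = (t - s) * f_alpha' \<alpha> z"
    using MVT2[of s t "f_alpha \<alpha>" "f_alpha' \<alpha>"] True assms f_alpha_has_real_derivative by force
  have "f_alpha' \<alpha> s < f_alpha' \<alpha> z" using f_alpha'_strict_mono assms z by auto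
  then have "(t - s) * f_alpha' \<alpha> s < (t - s) * f_alpha' \<alpha> z" using True by simp
  then show ?thesis using z by (simp add: bregman_def algebra_simps)
next
  case False
  then have "t < s" using assms by auto
  obtain z where z: "t < z" "z < s" "f_alpha \<alpha> s - f_alpha \<alpha> t = (s - t) * f_alpha' \<alpha> z"
    using MVT2[of t s "f_alpha \<alpha>" "f_alpha' \<alpha>"] \<open>t < s\<close> assms f_alpha_has_real_derivative by force
  have "f_alpha' \<alpha> z < f_alpha' \<alpha> s" using f_alpha'_strict_mono assms z by auto
  then have "(s - t) * f_alpha' \<alpha> z < (s - t) * f_alpha' \<alpha> s" using \<open>t < s\<close> by simp
  then show ?thesis using z by (simp add: bregman_def algebra_simps)
qed

lemma bregman_nonneg:
  assumes "\<alpha> \<noteq> 1" "s > 0" "t > 0"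
  shows "bregman \<alpha> s t \<ge> 0"
  using bregman_pos[OF assms] by (cases "s = t") (auto simp: bregman_def)

lemma f_alpha_nonneg:
  assumes "\<alpha> \<noteq> 1" "t > 0"
  shows "f_alpha \<alpha> t \<ge> 0"
proof -
  have "f_alpha \<alpha> 1 = 0" "f_alpha' \<alpha> 1 = 0" by (simp_all add: f_alpha_def f_alpha'_def)
  then show ?thesis using bregman_nonneg[OF assms(1) zero_less_one assms(2)] by (simp add: bregman_def)
qed

lemma f_alpha_measurable[measurable]: "f_alpha \<alpha> \<in> borel_measurable borel"
  unfolding f_alpha_def[abs_def] by measurable

lemma f_alpha'_measurable[measurable]: "f_alpha' \<alpha> \<in> borel_measurable borel"
  unfolding f_alpha'_def[abs_def] by measurable

lemma bregman_measurable[measurable]: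
  "(\<lambda>x. bregman \<alpha> (f x) (g x)) \<in> borel_measurable M"
  if "f \<in> borel_measurable M" "g \<in> borel_measurable M"
  using that unfolding bregman_def by measurable

lemma Gam_measurable[measurable]: "Gam \<alpha> \<eta> \<in> borel_measurable borel"
proof -
  have "(\<lambda>v. Gam \<alpha> \<eta> v) \<in> borel_measurable borel"
    unfolding Gam_def
  proof (rule borel_measurable_ereal_cases)
    show "(\<lambda>v. ereal (\<alpha> - 1) * v + 1) \<in> borel_measurable borel" by measurable
  next
    show "(\<lambda>v. case ereal (real_of_ereal (ereal (\<alpha> - 1) * v + 1)) of
        ereal w \<Rightarrow> (if w > 0 then ennreal (w powr (\<eta> / (1 - \<alpha>)))
                 else if w = 0 \<and> \<eta> / (1 - \<alpha>) < 0 then \<infinity> else 0)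
      | PInfty \<Rightarrow> (if \<eta> / (1 - \<alpha>) > 0 then \<infinity> else 0) | MInfty \<Rightarrow> 0) \<in> borel_measurable borel"
      unfolding ereal.case by measurable
  qed
  then show ?thesis by simp
qed

lemma affine_eq_if_Gam_eq_finite:
  assumes "Gam \<alpha> \<eta> v = N" "0 < N" "N < \<infinity>" "\<eta> / (1 - \<alpha>) \<noteq> 0"
  shows "ereal (\<alpha> - 1) * v + 1 = ereal (enn2real N powr ((1 - \<alpha>) / \<eta>))"
proof (cases "ereal (\<alpha> - 1) * v + 1")
  case (real w)
  with assms have "w > 0" "ennreal (w powr (\<eta> / (1 - \<alpha>))) = N"
    by (auto simp: Gam_def split: if_splits)
  then have "w = (enn2real N) powr (1 / (\<eta> / (1 - \<alpha>)))"
    using assms(4) by (auto simp: powr_powr)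
  with real show ?thesis by simp
qed (use assms in \<open>auto simp: Gam_def split: if_splits\<close>)

lemma nn_integral_eq_add_if_integral_zero:
  fixes f g h d :: "'a \<Rightarrow> real"
  assumes [measurable]: "f \<in> borel_measurable M" "g \<in> borel_measurable M" "d \<in> borel_measurable M"
    and h: "integrable M h" "(\<integral>x. h x \<partial>M) = 0"
    and eq: "AE x in M. f x = g x + h x + d x"
    and nonneg: "AE x in M. 0 \<le> f x" "AE x in M. 0 \<le> g x" "AE x in M. 0 \<le> d x"
  shows "(\<integral>\<^sup>+x. f x \<partial>M) = (\<integral>\<^sup>+x. g x \<partial>M) + (\<integral>\<^sup>+x. d x \<partial>M)"
proof -
  have [measurable]: "h \<in> borel_measurable M" using h(1) by simp
  have fin: "(\<integral>\<^sup>+x. ennreal (- h x) \<partial>M) \<noteq> \<infinity>" "(\<integral>\<^sup>+x. h x \<partial>M) \<noteq> \<infinity>"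
    using h(1) by (simp_all add: real_integrable_def)
  moreover have "enn2real (\<integral>\<^sup>+x. h x \<partial>M) = enn2real (\<integral>\<^sup>+x. ennreal (- h x) \<partial>M)"
    using h by (simp add: real_lebesgue_integral_def)
  ultimately have pos_neg: "(\<integral>\<^sup>+x. h x \<partial>M) = (\<integral>\<^sup>+x. ennreal (- h x) \<partial>M)"
    by (metis ennreal_enn2real_if infinity_ennreal_def)
  have "(\<integral>\<^sup>+x. f x \<partial>M) + (\<integral>\<^sup>+x. ennreal (- h x) \<partial>M) = (\<integral>\<^sup>+x. ennreal (f x) + ennreal (- h x) \<partial>M)"
    by (rule nn_integral_add[symmetric]) auto
  also have "\<dots> = (\<integral>\<^sup>+x. ennreal (g x) + ennreal (d x) + ennreal (h x) \<partial>M)"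
    using eq nonneg
  proof (intro nn_integral_cong_AE, eventually_elim)
    case (elim x)
    show ?case
    proof (cases "h x \<ge> 0")
      case True
      then show ?thesis using elim by (simp add: ennreal_neg ennreal_plus[symmetric] ac_simps del: ennreal_plus)
    next
      case False
      then show ?thesis using elim by (simp add: ennreal_neg ennreal_plus[symmetric] del: ennreal_plus)
    qed
  qed
  also have "\<dots> = (\<integral>\<^sup>+x. g x \<partial>M) + (\<integral>\<^sup>+x. d x \<partial>M) + (\<integral>\<^sup>+x. ennreal (- h x) \<partial>M)"
    unfolding pos_neg[symmetric] by (simp add: nn_integral_add)
  finally show ?thesis
    using fin by (metis add.commute ennreal_add_left_cancel infinity_ennreal_def)
qed

lemma enn2ereal_nn_integral_diff:
  fixes x y :: "'a \<Rightarrow> real"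
  assumes [measurable]: "x \<in> borel_measurable M" "y \<in> borel_measurable M"
    and nonneg: "AE t in M. 0 \<le> x t" "AE t in M. 0 \<le> y t"
    and fin: "(\<integral>\<^sup>+t. y t \<partial>M) \<noteq> \<infinity>"
  shows "enn2ereal (\<integral>\<^sup>+t. ennreal (x t - y t) \<partial>M) - enn2ereal (\<integral>\<^sup>+t. ennreal (y t - x t) \<partial>M)
    = enn2ereal (\<integral>\<^sup>+t. x t \<partial>M) - enn2ereal (\<integral>\<^sup>+t. y t \<partial>M)"
    (is "enn2ereal ?P - enn2ereal ?Q = enn2ereal ?X - enn2ereal ?Y")
proof -
  have "?P + ?Y = (\<integral>\<^sup>+t. ennreal (x t - y t) + ennreal (y t) \<partial>M)"
    by (rule nn_integral_add[symmetric]) auto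
  also have "\<dots> = (\<integral>\<^sup>+t. ennreal (x t) + ennreal (y t - x t) \<partial>M)"
    using nonneg
  proof (intro nn_integral_cong_AE, eventually_elim)
    case (elim t)
    then show ?case
      by (cases "x t \<le> y t") (simp_all add: ennreal_neg ennreal_plus[symmetric] del: ennreal_plus)
  qed
  also have "\<dots> = ?X + ?Q"
    by (rule nn_integral_add) auto
  finally have split: "?P + ?Y = ?X + ?Q" .
  have "?Q \<le> ?Y"
    using nonneg by (intro nn_integral_mono_AE, eventually_elim) (auto intro: ennreal_leI)
  then obtain q y0 where qy: "?Q = ennreal q" "?Y = ennreal y0" "0 \<le> q" "0 \<le> y0"
    using fin by (cases ?Q; cases ?Y) (auto simp: top_unique)
  show ?thesis
  proof (cases ?P)
    case top
    then have "?X = \<infinity>" using split qy by (cases ?X) (auto simp flip: ennreal_plus)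
    then show ?thesis using top qy by simp
  next
    case (real r)
    then obtain x0 where "?X = ennreal x0" "0 \<le> x0"
      using split qy by (cases ?X) (auto simp flip: ennreal_plus)
    moreover have "r + y0 = x0 + q"
      using split qy real \<open>?X = ennreal x0\<close> \<open>0 \<le> x0\<close> by (simp flip: ennreal_plus)
    ultimately show ?thesis using real qy by (simp add: algebra_simps)
  qed
qed

lemma ereal_mult_nn_integral_divide:
  fixes f :: "'a \<Rightarrow> real"
  assumes [measurable]: "f \<in> borel_measurable M" and c: "c > 0"
  shows "ereal c * enn2ereal (\<integral>\<^sup>+x. ennreal (f x / c) \<partial>M) = enn2ereal (\<integral>\<^sup>+x. ennreal (f x) \<partial>M)"
proof -
  have "(\<integral>\<^sup>+x. ennreal (f x / c) \<partial>M) = (\<integral>\<^sup>+x. ennreal (f x) * ennreal (1 / c) \<partial>M)"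
    using c by (intro nn_integral_cong) (simp add: ennreal_mult'' divide_inverse)
  also have "\<dots> = (\<integral>\<^sup>+x. ennreal (f x) \<partial>M) * ennreal (1 / c)"
    by (rule nn_integral_multc) measurable
  finally show ?thesis
    using c by (cases "enn2ereal (\<integral>\<^sup>+x. ennreal (f x) \<partial>M)") (simp_all add: times_ennreal.rep_eq)
qed

lemma ereal_mult_signed_nn_integral:
  fixes g :: "'a \<Rightarrow> real"
  assumes [measurable]: "g \<in> borel_measurable M" and c: "c \<noteq> 0"
    and fin: "(\<integral>\<^sup>+x. ennreal (g x) \<partial>M) \<noteq> \<infinity> \<or> (\<integral>\<^sup>+x. ennreal (- g x) \<partial>M) \<noteq> \<infinity>"
  shows "ereal c * (enn2ereal (\<integral>\<^sup>+x. ennreal (g x / c) \<partial>M) - enn2ereal (\<integral>\<^sup>+x. ennreal (- (g x / c)) \<partial>M))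
    = enn2ereal (\<integral>\<^sup>+x. ennreal (g x) \<partial>M) - enn2ereal (\<integral>\<^sup>+x. ennreal (- g x) \<partial>M)"
proof -
  have fin': "enn2ereal (\<integral>\<^sup>+x. ennreal (g x) \<partial>M) \<noteq> \<infinity> \<or> enn2ereal (\<integral>\<^sup>+x. ennreal (- g x) \<partial>M) \<noteq> \<infinity>"
    using fin by simp
  let ?X = "enn2ereal (\<integral>\<^sup>+x. ennreal (g x / c) \<partial>M)"
  let ?Y = "enn2ereal (\<integral>\<^sup>+x. ennreal (- (g x / c)) \<partial>M)"
  show ?thesis
  proof (cases "c > 0")
    case True
    then have eqs: "ereal c * ?X = enn2ereal (\<integral>\<^sup>+x. ennreal (g x) \<partial>M)"
      "ereal c * ?Y = enn2ereal (\<integral>\<^sup>+x. ennreal (- g x) \<partial>M)"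
      using ereal_mult_nn_integral_divide[of g M c] ereal_mult_nn_integral_divide[of "\<lambda>x. - g x" M c]
      by simp_all
    have "?X \<noteq> \<infinity> \<or> ?Y \<noteq> \<infinity>"
      using fin' True unfolding eqs[symmetric] by auto
    then show ?thesis
      unfolding eqs[symmetric] by (intro ereal_distrib_minus_left) auto
  next
    case False
    define d where "d = - c"
    have d: "d > 0" "c = - d" using False c by (auto simp: d_def)
    have eqs: "ereal d * ?Y = enn2ereal (\<integral>\<^sup>+x. ennreal (g x) \<partial>M)"
      "ereal d * ?X = enn2ereal (\<integral>\<^sup>+x. ennreal (- g x) \<partial>M)"
      using ereal_mult_nn_integral_divide[of g M d] ereal_mult_nn_integral_divide[of "\<lambda>x. - g x" M d] d
      by simp_all
    have "?X \<noteq> \<infinity> \<or> ?Y \<noteq> \<infinity>"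
      using fin' d unfolding eqs[symmetric] by auto
    moreover have "ereal c = - ereal d" using d by simp
    ultimately show ?thesis
      unfolding eqs[symmetric] by (cases ?X; cases ?Y) (auto simp: algebra_simps)
  qed
qed

locale power_descent =
  fixes \<nu> :: "'a measure" and T :: "'b measure" and k :: "'b \<Rightarrow> 'a \<Rightarrow> real" and p :: "'a \<Rightarrow> real"
  assumes sigma_finite: "sigma_finite_measure \<nu>"
    and k_measurable: "(\<lambda>(\<theta>, y). k \<theta> y) \<in> borel_measurable (T \<Otimes>\<^sub>M \<nu>)"
    and k_pos: "\<And>\<theta> y. \<theta> \<in> space T \<Longrightarrow> y \<in> space \<nu> \<Longrightarrow> k \<theta> y > 0"
    and k_normalized: "\<And>\<theta>. \<theta> \<in> space T \<Longrightarrow> (\<integral>\<^sup>+ y. ennreal (k \<theta> y) \<partial>\<nu>) = 1"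
    and p_measurable[measurable]: "p \<in> borel_measurable \<nu>"
    and p_pos: "\<And>y. y \<in> space \<nu> \<Longrightarrow> p y > 0"
begin

interpretation \<nu>: sigma_finite_measure \<nu> by (rule sigma_finite)

context
  fixes Q assumes Q_prob: "prob_space Q" and sets_Q: "sets Q = sets T"
begin

interpretation Q: prob_space Q by (rule Q_prob)
interpretation Q\<nu>: pair_sigma_finite Q \<nu> ..

lemma space_Q: "space Q = space T"
  using sets_Q by (rule sets_eq_imp_space_eq)

lemma k_measurable_Q[measurable]: "(\<lambda>x. k (fst x) (snd x)) \<in> borel_measurable (Q \<Otimes>\<^sub>M \<nu>)"
proof -
  have "sets (Q \<Otimes>\<^sub>M \<nu>) = sets (T \<Otimes>\<^sub>M \<nu>)" by (rule sets_pair_measure_cong[OF sets_Q refl])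
  from measurable_cong_sets[OF this refl, of "borel :: real measure"] k_measurable
  show ?thesis by (simp add: case_prod_beta')
qed

lemma k_slice_measurable[measurable]: "y \<in> space \<nu> \<Longrightarrow> (\<lambda>\<theta>. k \<theta> y) \<in> borel_measurable Q"
  using measurable_Pair1[OF k_measurable_Q, of y] by simp

lemma nn_integral_k_Q_measurable[measurable]:
  "(\<lambda>y. \<integral>\<^sup>+\<theta>. ennreal (k \<theta> y) \<partial>Q) \<in> borel_measurable \<nu>"
proof -
  have "(\<lambda>(y, \<theta>). ennreal (k \<theta> y)) \<in> borel_measurable (\<nu> \<Otimes>\<^sub>M Q)"
    using measurable_pair_swap[OF k_measurable_Q] by (simp add: case_prod_beta')
  then show ?thesis by (rule Q.borel_measurable_nn_integral)
qed

lemma muk_measurable[measurable]: "muk k Q \<in> borel_measurable \<nu>"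
  unfolding muk_def[abs_def] by measurable

lemma nn_integral_swap_k:
  assumes [measurable]: "h \<in> borel_measurable \<nu>"
  shows "(\<integral>\<^sup>+\<theta>. (\<integral>\<^sup>+y. ennreal (k \<theta> y * h y) \<partial>\<nu>) \<partial>Q)
     = (\<integral>\<^sup>+y. (\<integral>\<^sup>+\<theta>. ennreal (k \<theta> y) \<partial>Q) * ennreal (h y) \<partial>\<nu>)"
proof -
  have "(\<integral>\<^sup>+\<theta>. (\<integral>\<^sup>+y. ennreal (k \<theta> y * h y) \<partial>\<nu>) \<partial>Q)
      = (\<integral>\<^sup>+y. (\<integral>\<^sup>+\<theta>. ennreal (k \<theta> y * h y) \<partial>Q) \<partial>\<nu>)"
    using Q\<nu>.Fubini'[of "\<lambda>\<theta> y. ennreal (k \<theta> y * h y)"] by (simp add: case_prod_beta')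
  also have "\<dots> = (\<integral>\<^sup>+y. (\<integral>\<^sup>+\<theta>. ennreal (k \<theta> y) * ennreal (h y) \<partial>Q) \<partial>\<nu>)"
    using k_pos space_Q by (intro nn_integral_cong) (auto simp: ennreal_mult' less_imp_le)
  also have "\<dots> = (\<integral>\<^sup>+y. (\<integral>\<^sup>+\<theta>. ennreal (k \<theta> y) \<partial>Q) * ennreal (h y) \<partial>\<nu>)"
    by (intro nn_integral_cong nn_integral_multc) measurable
  finally show ?thesis .
qed

lemma nn_integral_nn_integral_k: "(\<integral>\<^sup>+y. (\<integral>\<^sup>+\<theta>. ennreal (k \<theta> y) \<partial>Q) \<partial>\<nu>) = 1"
proof -
  have "(\<integral>\<^sup>+y. (\<integral>\<^sup>+\<theta>. ennreal (k \<theta> y) \<partial>Q) \<partial>\<nu>) = (\<integral>\<^sup>+\<theta>. (\<integral>\<^sup>+y. ennreal (k \<theta> y * 1) \<partial>\<nu>) \<partial>Q)"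
    by (subst nn_integral_swap_k) simp_all
  also have "\<dots> = (\<integral>\<^sup>+\<theta>. 1 \<partial>Q)"
    using k_normalized space_Q by (intro nn_integral_cong) auto
  finally show ?thesis by (simp add: Q.emeasure_space_1)
qed

lemma AE_muk: "AE y in \<nu>. 0 < muk k Q y \<and> ennreal (muk k Q y) = (\<integral>\<^sup>+\<theta>. ennreal (k \<theta> y) \<partial>Q)"
proof -
  have "AE y in \<nu>. (\<integral>\<^sup>+\<theta>. ennreal (k \<theta> y) \<partial>Q) \<noteq> \<infinity>"
    using nn_integral_nn_integral_k by (intro nn_integral_PInf_AE) auto
  then show ?thesis
  proof (rule AE_mp, intro AE_I2 impI)
    fix y assume y: "y \<in> space \<nu>" and fin: "(\<integral>\<^sup>+\<theta>. ennreal (k \<theta> y) \<partial>Q) \<noteq> \<infinity>"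
    have "(\<integral>\<^sup>+\<theta>. ennreal (k \<theta> y) \<partial>Q) \<noteq> 0"
    proof
      assume "(\<integral>\<^sup>+\<theta>. ennreal (k \<theta> y) \<partial>Q) = 0"
      then have "AE \<theta> in Q. ennreal (k \<theta> y) = 0"
        using y by (simp add: nn_integral_0_iff_AE)
      moreover have "AE \<theta> in Q. ennreal (k \<theta> y) \<noteq> 0"
        using y k_pos space_Q by (intro AE_I2) (simp add: ennreal_eq_0_iff not_le)
      ultimately have "AE \<theta> in Q. False" by eventually_elim simp
      then show False by simp
    qed
    then show "0 < muk k Q y \<and> ennreal (muk k Q y) = (\<integral>\<^sup>+\<theta>. ennreal (k \<theta> y) \<partial>Q)"
      using fin unfolding muk_def
      by (cases "(\<integral>\<^sup>+\<theta>. ennreal (k \<theta> y) \<partial>Q)") (auto simp: enn2real_positive_iff)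
  qed
qed

lemma nn_integral_muk_mult:
  assumes [measurable]: "h \<in> borel_measurable \<nu>"
  shows "(\<integral>\<^sup>+\<theta>. (\<integral>\<^sup>+y. ennreal (k \<theta> y * h y) \<partial>\<nu>) \<partial>Q) = (\<integral>\<^sup>+y. ennreal (muk k Q y * h y) \<partial>\<nu>)"
  unfolding nn_integral_swap_k[OF assms]
  by (intro nn_integral_cong_AE, use AE_muk in eventually_elim) (auto simp: ennreal_mult')

lemma nn_integral_muk: "(\<integral>\<^sup>+y. ennreal (muk k Q y) \<partial>\<nu>) = 1"
  unfolding nn_integral_nn_integral_k[symmetric]
  using AE_muk by (intro nn_integral_cong_AE) auto

lemma integrable_muk: "integrable \<nu> (muk k Q)"
  using AE_muk nn_integral_muk by (intro integrableI_nonneg) (auto elim: AE_mp)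

lemma integral_muk: "(\<integral>y. muk k Q y \<partial>\<nu>) = 1"
  using AE_muk nn_integral_muk by (subst integral_eq_nn_integral) (auto elim: AE_mp)

lemma muK_eq_nn_integral_muk:
  assumes "A \<in> sets \<nu>"
  shows "muK k \<nu> Q A = (\<integral>\<^sup>+y. ennreal (muk k Q y * indicator A y) \<partial>\<nu>)"
proof -
  have "muK k \<nu> Q A = (\<integral>\<^sup>+\<theta>. (\<integral>\<^sup>+y. ennreal (k \<theta> y * indicator A y) \<partial>\<nu>) \<partial>Q)"
    unfolding muK_def kernK_def by (intro nn_integral_cong) (auto simp: indicator_def)
  also have "\<dots> = (\<integral>\<^sup>+y. ennreal (muk k Q y * indicator A y) \<partial>\<nu>)"
    using assms by (intro nn_integral_muk_mult) simp
  finally show ?thesis .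
qed

lemma b_mu_measurable[measurable]: "b_mu \<alpha> k \<nu> p Q \<in> borel_measurable Q"
proof -
  have "(\<lambda>(\<theta>, y). ennreal (k \<theta> y * f_alpha' \<alpha> (muk k Q y / p y))) \<in> borel_measurable (Q \<Otimes>\<^sub>M \<nu>)"
    "(\<lambda>(\<theta>, y). ennreal (- (k \<theta> y * f_alpha' \<alpha> (muk k Q y / p y)))) \<in> borel_measurable (Q \<Otimes>\<^sub>M \<nu>)"
    unfolding case_prod_beta' by measurable
  from this[THEN \<nu>.borel_measurable_nn_integral] show ?thesis
    unfolding b_mu_def[abs_def] by measurable
qed

lemma b_mu_affine:
  assumes \<alpha>: "\<alpha> \<noteq> 1" and \<theta>: "\<theta> \<in> space T"
  shows "ereal (\<alpha> - 1) * (b_mu \<alpha> k \<nu> p Q \<theta> + ereal \<kappa>) + 1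
    = enn2ereal (\<integral>\<^sup>+y. ennreal (k \<theta> y * (muk k Q y / p y) powr (\<alpha> - 1)) \<partial>\<nu>) + ereal ((\<alpha> - 1) * \<kappa>)"
proof -
  define r where "r y = (muk k Q y / p y) powr (\<alpha> - 1)" for y
  define g where "g y = k \<theta> y * r y - k \<theta> y" for y
  have [measurable]: "(\<lambda>y. k \<theta> y) \<in> borel_measurable \<nu>"
    using measurable_Pair2[OF k_measurable_Q, of \<theta>] \<theta> space_Q by simp
  have [measurable]: "r \<in> borel_measurable \<nu>" unfolding r_def[abs_def] by measurable
  have [measurable]: "g \<in> borel_measurable \<nu>" unfolding g_def[abs_def] by measurable
  have k_nonneg: "AE y in \<nu>. 0 \<le> k \<theta> y"
    using k_pos \<theta> by (intro AE_I2) (simp add: less_imp_le)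
  then have kr_nonneg: "AE y in \<nu>. 0 \<le> k \<theta> y * r y"
    by eventually_elim (simp add: r_def)
  have "(\<integral>\<^sup>+y. ennreal (- g y) \<partial>\<nu>) \<le> (\<integral>\<^sup>+y. ennreal (k \<theta> y) \<partial>\<nu>)"
    using kr_nonneg by (intro nn_integral_mono_AE, eventually_elim) (auto simp: g_def intro: ennreal_leI)
  then have fin: "(\<integral>\<^sup>+y. ennreal (- g y) \<partial>\<nu>) \<noteq> \<infinity>"
    using k_normalized[OF \<theta>] by (auto simp: top_unique)
  have "k \<theta> y * f_alpha' \<alpha> (muk k Q y / p y) = g y / (\<alpha> - 1)" for y
    by (simp add: f_alpha'_def g_def r_def right_diff_distrib)
  then have "ereal (\<alpha> - 1) * b_mu \<alpha> k \<nu> p Q \<theta>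
      = enn2ereal (\<integral>\<^sup>+y. ennreal (g y) \<partial>\<nu>) - enn2ereal (\<integral>\<^sup>+y. ennreal (- g y) \<partial>\<nu>)"
    unfolding b_mu_def using ereal_mult_signed_nn_integral[of g \<nu> "\<alpha> - 1"] fin \<alpha> by simp
  also have "\<dots> = enn2ereal (\<integral>\<^sup>+y. ennreal (k \<theta> y * r y) \<partial>\<nu>) - 1"
    using enn2ereal_nn_integral_diff[of "\<lambda>y. k \<theta> y * r y" \<nu> "\<lambda>y. k \<theta> y"] k_nonneg kr_nonneg
      k_normalized[OF \<theta>]
    by (simp add: g_def one_ennreal.rep_eq)
  finally have "ereal (\<alpha> - 1) * b_mu \<alpha> k \<nu> p Q \<theta> = enn2ereal (\<integral>\<^sup>+y. ennreal (k \<theta> y * r y) \<partial>\<nu>) - 1" .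
  then show ?thesis
    by (cases "enn2ereal (\<integral>\<^sup>+y. ennreal (k \<theta> y * r y) \<partial>\<nu>)")
       (simp_all add: ereal_distrib_left r_def one_ereal_def)
qed

lemma nn_integral_muk_mult_AE_const:
  assumes [measurable]: "h \<in> borel_measurable \<nu>"
    and const: "AE \<theta> in Q. (\<integral>\<^sup>+y. ennreal (k \<theta> y * h y) \<partial>\<nu>) = c"
  shows "(\<integral>\<^sup>+y. ennreal (muk k Q y * h y) \<partial>\<nu>) = c"
  using nn_integral_cong_AE[OF const] by (simp add: nn_integral_muk_mult[symmetric] Q.emeasure_space_1)

end

lemma Psi_eq_Psi_plus_bregman:
  assumes \<mu>: "prob_space \<mu>" "sets \<mu> = sets T" and \<zeta>: "prob_space \<zeta>" "sets \<zeta> = sets T"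
    and \<alpha>: "\<alpha> \<noteq> 1"
    and eq: "(\<integral>\<^sup>+y. ennreal (muk k \<zeta> y * (muk k \<mu> y / p y) powr (\<alpha> - 1)) \<partial>\<nu>)
      = (\<integral>\<^sup>+y. ennreal (muk k \<mu> y * (muk k \<mu> y / p y) powr (\<alpha> - 1)) \<partial>\<nu>)"
    and fin: "(\<integral>\<^sup>+y. ennreal (muk k \<mu> y * (muk k \<mu> y / p y) powr (\<alpha> - 1)) \<partial>\<nu>) < \<infinity>"
  shows "Psi \<alpha> k \<nu> p \<zeta>
    = Psi \<alpha> k \<nu> p \<mu> + (\<integral>\<^sup>+y. ennreal (p y * bregman \<alpha> (muk k \<mu> y / p y) (muk k \<zeta> y / p y)) \<partial>\<nu>)"
proof -
  define u v where "u = muk k \<mu>" and "v = muk k \<zeta>"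
  define r where "r y = (u y / p y) powr (\<alpha> - 1)" for y
  define h where "h y = f_alpha' \<alpha> (u y / p y) * (v y - u y)" for y
  have [measurable]: "u \<in> borel_measurable \<nu>" "v \<in> borel_measurable \<nu>" "r \<in> borel_measurable \<nu>"
    using muk_measurable[OF \<mu>] muk_measurable[OF \<zeta>] by (simp_all add: u_def v_def r_def[abs_def])
  have pos: "AE y in \<nu>. 0 < u y \<and> 0 < v y \<and> 0 < p y"
    using AE_muk[OF \<mu>] AE_muk[OF \<zeta>] AE_space by eventually_elim (simp add: u_def v_def p_pos)
  have fin': "(\<integral>\<^sup>+y. ennreal (u y * r y) \<partial>\<nu>) < \<infinity>"
    and eq': "(\<integral>\<^sup>+y. ennreal (v y * r y) \<partial>\<nu>) = (\<integral>\<^sup>+y. ennreal (u y * r y) \<partial>\<nu>)"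
    using fin eq by (simp_all add: u_def v_def r_def)
  have meas: "(\<lambda>y. u y * r y) \<in> borel_measurable \<nu>" "(\<lambda>y. v y * r y) \<in> borel_measurable \<nu>"
    by measurable
  have nonneg: "AE y in \<nu>. 0 \<le> u y * r y" "AE y in \<nu>. 0 \<le> v y * r y"
    using pos by (eventually_elim, simp add: r_def)+
  have int_ur: "integrable \<nu> (\<lambda>y. u y * r y)" and int_vr: "integrable \<nu> (\<lambda>y. v y * r y)"
    using meas nonneg fin' eq' by (auto intro!: integrableI_nonneg)
  have "(\<integral>y. v y * r y \<partial>\<nu>) = (\<integral>y. u y * r y \<partial>\<nu>)"
    using meas nonneg eq' by (simp add: integral_eq_nn_integral)
  moreover have "integrable \<nu> u" "integrable \<nu> v" "(\<integral>y. u y \<partial>\<nu>) = (\<integral>y. v y \<partial>\<nu>)"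
    using integrable_muk[OF \<mu>] integrable_muk[OF \<zeta>] integral_muk[OF \<mu>] integral_muk[OF \<zeta>]
    by (simp_all add: u_def v_def)
  moreover have "h = (\<lambda>y. (v y * r y - u y * r y - (v y - u y)) / (\<alpha> - 1))"
    by (simp add: h_def r_def f_alpha'_def fun_eq_iff algebra_simps)
  ultimately have "integrable \<nu> h" "(\<integral>y. h y \<partial>\<nu>) = 0"
    using int_ur int_vr by simp_all
  moreover have "AE y in \<nu>. f_alpha \<alpha> (v y / p y) * p y
      = f_alpha \<alpha> (u y / p y) * p y + h y + p y * bregman \<alpha> (u y / p y) (v y / p y)"
    using pos by eventually_elim (simp add: h_def bregman_def field_simps)
  moreover have "AE y in \<nu>. 0 \<le> f_alpha \<alpha> (v y / p y) * p y" "AE y in \<nu>. 0 \<le> f_alpha \<alpha> (u y / p y) * p y"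
    "AE y in \<nu>. 0 \<le> p y * bregman \<alpha> (u y / p y) (v y / p y)"
    using pos by (eventually_elim, simp add: f_alpha_nonneg bregman_nonneg \<alpha>)+
  ultimately show ?thesis
    unfolding Psi_def u_def[symmetric] v_def[symmetric]
    by (intro nn_integral_eq_add_if_integral_zero) measurable
qed

lemma AE_muk_eq_if_bregman_integral_zero:
  assumes \<mu>: "prob_space \<mu>" "sets \<mu> = sets T" and \<zeta>: "prob_space \<zeta>" "sets \<zeta> = sets T"
    and \<alpha>: "\<alpha> \<noteq> 1"
    and zero: "(\<integral>\<^sup>+y. ennreal (p y * bregman \<alpha> (muk k \<mu> y / p y) (muk k \<zeta> y / p y)) \<partial>\<nu>) = 0"
  shows "AE y in \<nu>. muk k \<mu> y = muk k \<zeta> y"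
proof -
  have "AE y in \<nu>. ennreal (p y * bregman \<alpha> (muk k \<mu> y / p y) (muk k \<zeta> y / p y)) = 0"
    using zero muk_measurable[OF \<mu>] muk_measurable[OF \<zeta>] by (subst (asm) nn_integral_0_iff_AE) simp_all
  with AE_muk[OF \<mu>] AE_muk[OF \<zeta>] AE_space show ?thesis
  proof eventually_elim
    case (elim y)
    then have "0 < p y" by (simp add: p_pos)
    show ?case
    proof (rule ccontr)
      assume "muk k \<mu> y \<noteq> muk k \<zeta> y"
      with elim \<open>0 < p y\<close> have "0 < bregman \<alpha> (muk k \<mu> y / p y) (muk k \<zeta> y / p y)"
        by (intro bregman_pos[OF \<alpha>]) auto
      from mult_pos_pos[OF \<open>0 < p y\<close> this] elim show False by (simp add: ennreal_eq_0_iff)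
    qed
  qed
qed

lemma fixed_point_kernel_integral_AE_const:
  assumes \<mu>: "prob_space \<mu>" "sets \<mu> = sets T" and \<alpha>: "\<alpha> \<noteq> 1" and \<eta>: "\<eta> \<noteq> 0"
    and N: "0 < normI \<alpha> \<eta> \<kappa> k \<nu> p \<mu>" "normI \<alpha> \<eta> \<kappa> k \<nu> p \<mu> < \<infinity>"
    and fixed: "I_alpha \<alpha> \<eta> \<kappa> k \<nu> p \<mu> = \<mu>"
  obtains C where "AE \<theta> in \<mu>. (\<integral>\<^sup>+y. ennreal (k \<theta> y * (muk k \<mu> y / p y) powr (\<alpha> - 1)) \<partial>\<nu>) = ennreal C"
proof -
  interpret \<mu>: prob_space \<mu> by (rule \<mu>(1))
  let ?N = "normI \<alpha> \<eta> \<kappa> k \<nu> p \<mu>"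
  let ?G = "\<lambda>\<theta>. Gam \<alpha> \<eta> (b_mu \<alpha> k \<nu> p \<mu> \<theta> + ereal \<kappa>)"
  define c where "c = enn2real ?N powr ((1 - \<alpha>) / \<eta>)"
  have [measurable]: "b_mu \<alpha> k \<nu> p \<mu> \<in> borel_measurable \<mu>"
    by (rule b_mu_measurable[OF \<mu>])
  have "density \<mu> (\<lambda>\<theta>. ?G \<theta> / ?N) = density \<mu> (\<lambda>_. 1)"
    using fixed by (simp add: I_alpha_def normI_def density_1)
  then have "AE \<theta> in \<mu>. ?G \<theta> / ?N = 1"
    by (subst (asm) \<mu>.density_unique_iff) measurable
  then have affine_const: "AE \<theta> in \<mu>. ereal (\<alpha> - 1) * (b_mu \<alpha> k \<nu> p \<mu> \<theta> + ereal \<kappa>) + 1 = ereal c"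
    by eventually_elim (use N \<eta> \<alpha> in \<open>auto simp: divide_eq_1_ennreal c_def intro!: affine_eq_if_Gam_eq_finite\<close>)
  have space_\<mu>: "space \<mu> = space T" using \<mu>(2) by (rule sets_eq_imp_space_eq)
  have "AE \<theta> in \<mu>. (\<integral>\<^sup>+y. ennreal (k \<theta> y * (muk k \<mu> y / p y) powr (\<alpha> - 1)) \<partial>\<nu>)
      = ennreal (c - (\<alpha> - 1) * \<kappa>)"
    using affine_const AE_space
  proof eventually_elim
    case (elim \<theta>)
    let ?B = "\<integral>\<^sup>+y. ennreal (k \<theta> y * (muk k \<mu> y / p y) powr (\<alpha> - 1)) \<partial>\<nu>"
    have "enn2ereal ?B + ereal ((\<alpha> - 1) * \<kappa>) = ereal c"
      using elim space_\<mu> by (simp add: b_mu_affine[OF \<mu> \<alpha>])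
    then show ?case by (cases ?B) auto
  qed
  then show ?thesis by (rule that)
qed

lemma muK_eq_if_AE_muk_eq:
  assumes \<mu>: "prob_space \<mu>" "sets \<mu> = sets T" and \<zeta>: "prob_space \<zeta>" "sets \<zeta> = sets T"
    and eq: "AE y in \<nu>. muk k \<mu> y = muk k \<zeta> y" and A: "A \<in> sets \<nu>"
  shows "muK k \<nu> \<mu> A = muK k \<nu> \<zeta> A"
  unfolding muK_eq_nn_integral_muk[OF \<mu> A] muK_eq_nn_integral_muk[OF \<zeta> A]
  using eq by (intro nn_integral_cong_AE) auto

lemma Psi_eq_fixed_point_plus_bregman:
  assumes \<mu>: "prob_space \<mu>" "sets \<mu> = sets T" and \<alpha>: "\<alpha> \<noteq> 1" and \<eta>: "\<eta> \<noteq> 0"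
    and N: "0 < normI \<alpha> \<eta> \<kappa> k \<nu> p \<mu>" "normI \<alpha> \<eta> \<kappa> k \<nu> p \<mu> < \<infinity>"
    and fixed: "I_alpha \<alpha> \<eta> \<kappa> k \<nu> p \<mu> = \<mu>"
    and \<zeta>: "\<zeta> \<in> M1_dom T \<mu>"
  shows "Psi \<alpha> k \<nu> p \<zeta>
    = Psi \<alpha> k \<nu> p \<mu> + (\<integral>\<^sup>+y. ennreal (p y * bregman \<alpha> (muk k \<mu> y / p y) (muk k \<zeta> y / p y)) \<partial>\<nu>)"
proof -
  have \<zeta>': "prob_space \<zeta>" "sets \<zeta> = sets T" "absolutely_continuous \<mu> \<zeta>"
    using \<zeta> by (auto simp: M1_dom_def)
  define r where "r y = (muk k \<mu> y / p y) powr (\<alpha> - 1)" for y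
  have [measurable]: "r \<in> borel_measurable \<nu>"
    using muk_measurable[OF \<mu>] unfolding r_def[abs_def] by measurable
  obtain C where C: "AE \<theta> in \<mu>. (\<integral>\<^sup>+y. ennreal (k \<theta> y * r y) \<partial>\<nu>) = ennreal C"
    using fixed_point_kernel_integral_AE_const[OF \<mu> \<alpha> \<eta> N fixed] unfolding r_def by blast
  have "AE \<theta> in \<zeta>. (\<integral>\<^sup>+y. ennreal (k \<theta> y * r y) \<partial>\<nu>) = ennreal C"
    by (rule absolutely_continuous_AE[OF _ \<zeta>'(3) C]) (simp add: \<zeta>'(2) \<mu>(2))
  then have "(\<integral>\<^sup>+y. ennreal (muk k \<zeta> y * r y) \<partial>\<nu>) = ennreal C"
    by (intro nn_integral_muk_mult_AE_const[OF \<zeta>'(1,2)]) simp_all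
  moreover have "(\<integral>\<^sup>+y. ennreal (muk k \<mu> y * r y) \<partial>\<nu>) = ennreal C"
    using C by (intro nn_integral_muk_mult_AE_const[OF \<mu>]) simp_all
  ultimately show ?thesis
    by (intro Psi_eq_Psi_plus_bregman[OF \<mu> \<zeta>'(1,2) \<alpha>]) (simp_all add: r_def)
qed

end

theorem mainTheorem6:
  fixes \<nu> :: "'a measure" and T :: "'b measure"
    and k :: "'b \<Rightarrow> 'a \<Rightarrow> real" and p :: "'a \<Rightarrow> real"
    and \<alpha> \<eta> \<kappa> :: real and \<mu>bar :: "'b measure"
  assumes sf: "sigma_finite_measure \<nu>"
    and k_meas: "(\<lambda>(\<theta>, y). k \<theta> y) \<in> borel_measurable (T \<Otimes>\<^sub>M \<nu>)"
    and k_pos: "\<And>\<theta> y. \<theta> \<in> space T \<Longrightarrow> y \<in> space \<nu> \<Longrightarrow> k \<theta> y > 0"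
    and k_int: "\<And>\<theta>. \<theta> \<in> space T \<Longrightarrow> (\<integral>\<^sup>+ y. ennreal (k \<theta> y) \<partial>\<nu>) = 1"
    and p_meas: "p \<in> borel_measurable \<nu>"
    and p_pos: "\<And>y. y \<in> space \<nu> \<Longrightarrow> p y > 0"
    and p_int: "(\<integral>\<^sup>+ y. ennreal (p y) \<partial>\<nu>) < \<infinity>"
    and alpha: "\<alpha> \<noteq> 1" and eta: "\<eta> > 0" and kappa: "(\<alpha> - 1) * \<kappa> \<ge> 0"
    and mu_prob: "prob_space \<mu>bar" and mu_sets: "sets \<mu>bar = sets T"
    and Psi_fin: "Psi \<alpha> k \<nu> p \<mu>bar < \<infinity>"
    and norm_pos: "0 < normI \<alpha> \<eta> \<kappa> k \<nu> p \<mu>bar"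
    and norm_fin: "normI \<alpha> \<eta> \<kappa> k \<nu> p \<mu>bar < \<infinity>"
    and fixed: "I_alpha \<alpha> \<eta> \<kappa> k \<nu> p \<mu>bar = \<mu>bar"
  shows "Psi \<alpha> k \<nu> p \<mu>bar = (INF \<zeta> \<in> M1_dom T \<mu>bar. Psi \<alpha> k \<nu> p \<zeta>)
    \<and> (\<forall>\<zeta> \<in> M1_dom T \<mu>bar. Psi \<alpha> k \<nu> p \<zeta> = Psi \<alpha> k \<nu> p \<mu>bar
          \<longrightarrow> (\<forall>A \<in> sets \<nu>. muK k \<nu> \<mu>bar A = muK k \<nu> \<zeta> A))"
proof -
  interpret power_descent \<nu> T k p
    by (rule power_descent.intro[OF sf k_meas k_pos k_int p_meas p_pos])
  have \<eta>: "\<eta> \<noteq> 0" using eta by simp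
  note Psi_eq = Psi_eq_fixed_point_plus_bregman[OF mu_prob mu_sets alpha \<eta> norm_pos norm_fin fixed]
  have "\<mu>bar \<in> M1_dom T \<mu>bar"
    by (simp add: M1_dom_def mu_prob mu_sets absolutely_continuous_def)
  moreover have "Psi \<alpha> k \<nu> p \<mu>bar \<le> Psi \<alpha> k \<nu> p \<zeta>" if "\<zeta> \<in> M1_dom T \<mu>bar" for \<zeta>
    by (simp add: Psi_eq[OF that])
  ultimately have "Psi \<alpha> k \<nu> p \<mu>bar = (INF \<zeta> \<in> M1_dom T \<mu>bar. Psi \<alpha> k \<nu> p \<zeta>)"
    by (intro antisym INF_greatest) (auto intro: INF_lower2)
  moreover have "muK k \<nu> \<mu>bar A = muK k \<nu> \<zeta> A"
    if \<zeta>: "\<zeta> \<in> M1_dom T \<mu>bar" and eq: "Psi \<alpha> k \<nu> p \<zeta> = Psi \<alpha> k \<nu> p \<mu>bar" and A: "A \<in> sets \<nu>" for \<zeta> A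
  proof -
    have \<zeta>': "prob_space \<zeta>" "sets \<zeta> = sets T" using \<zeta> by (auto simp: M1_dom_def)
    have "Psi \<alpha> k \<nu> p \<mu>bar + (\<integral>\<^sup>+y. ennreal (p y * bregman \<alpha> (muk k \<mu>bar y / p y) (muk k \<zeta> y / p y)) \<partial>\<nu>)
        = Psi \<alpha> k \<nu> p \<mu>bar + 0"
      using Psi_eq[OF \<zeta>] eq by simp
    then have "(\<integral>\<^sup>+y. ennreal (p y * bregman \<alpha> (muk k \<mu>bar y / p y) (muk k \<zeta> y / p y)) \<partial>\<nu>) = 0"
      using Psi_fin by (auto simp: ennreal_add_left_cancel)
    then show ?thesis
      by (intro muK_eq_if_AE_muk_eq[OF mu_prob mu_sets \<zeta>' _ A]
          AE_muk_eq_if_bregman_integral_zero[OF mu_prob mu_sets \<zeta>' alpha])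
  qed
  ultimately show ?thesis by blast
qed

end
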